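(* Let $\operatorname{rk}L=2$ with basis $e_1,e_2$, $x_i=X^{f_i}$ for the dual basis, $k=\omega(e_1,e_2)\neq0$, and let $m_1\ge1$, $m_2\ge0$. Let $\Sigma=\{m_1\times e_2,\ m_2\times(-e_2)\}$ and let $\Sigma'=\{(m_1-1)\times e_2,\ (m_2+1)\times(-e_2)\}$ be its mutation in (one copy of) $e_2$. Then $\mathcal U(\Sigma)=\mu_{e_2}^*\bigl(\mathcal U(\Sigma')\bigr)$, where $\mu_{e_2}^*$ is the substitution $x_1\mapsto x_1$, $x_2\mapsto x_2/(1+x_1^k)$.
   Context: For a lattice $L$ with skew-symmetric integral bilinear form $\omega$: $L^*=\mathrm{Hom}(L,\mathbb Z)$, $(\cdot,\cdot)$ the canonical pairing; $\mathcal Q=\mathbb Q(e^{2\pi i\mathbb Q})$ is $\mathbb Q$ with all roots of unity adjoined; $\mathcal Q[L^*]$ is the group algebra of $L^*$ with monomials $X^m$, and $\mathbb K_L$ its fraction field. For $v\in L$, $\mu_v^*$ is the $\mathcal Q$-algebra automorphism of $\mathbb K_L$ with $\mu_v^*(X^m)=X^m(1+X^{\omega(\cdot,v)})^{-(m,v)}$, where $\omega(\cdot,v)\in L^*$ is $w\mapsto\omega(w,v)$. An exchange collection is a finite tuple of vectors with multiplicity function $m_V$; $\{m_1\times u_1,m_2\times u_2\}$ denotes the collection with $u_j$ of multiplicity $m_j$. The upper bound is $\mathcal U(V)=\mathcal Q[L^*]\cap\bigcap_{v\in L}(\mu_v^* )^{m_V(v)}(\mathcal Q[L^*])\subset\mathbb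 K_L$. *)

theory Defs
  imports Complex_Main "HOL-Computational_Algebra.Polynomial" "HOL-Computational_Algebra.Fraction_Field"
begin

text \<open>Rank 2 lattice L = Z x Z in the basis e1, e2; the dual lattice L* = Z x Z in the
  dual basis f1, f2.  The skew form is determined by k = omega(e1,e2).\<close>

type_synonym lat = "int \<times> int"

definition pairing :: "lat \<Rightarrow> lat \<Rightarrow> int" where
  "pairing m v = fst m * fst v + snd m * snd v"

definition omega :: "int \<Rightarrow> lat \<Rightarrow> lat \<Rightarrow> int" where
  "omega k v w = k * (fst v * snd w - snd v * fst w)"

definition omega_dual :: "int \<Rightarrow> lat \<Rightarrow> lat" where
  "omega_dual k v = (omega k (1,0) v, omega k (0,1) v)"

definition Qcyc :: "complex set" where
  "Qcyc = \<Inter>{F. 0 \<in> F \<and> 1 \<in> F \<and> (\<forall>x\<in>F. \<forall>y\<in>F. x + y \<in> F \<and> x * y \<in> F)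
              \<and> (\<forall>x\<in>F. - x \<in> F \<and> inverse x \<in> F) \<and> {z. \<exists>n>0. z ^ n = 1} \<subseteq> F}"

text \<open>Ambient field C(x1,x2) = Frac(C[x1][x2]); it contains K_L = Frac(Qcyc[L*]).
  The outer polynomial variable is x2, the inner one x1.\<close>
type_synonym KL = "complex poly poly fract"

definition X1 :: KL where "X1 = Fract [:[:0, 1:]:] 1"
definition X2 :: KL where "X2 = Fract [:0, 1:] 1"

definition Xmon :: "lat \<Rightarrow> KL" where
  "Xmon m = X1 powi fst m * X2 powi snd m"

definition LaurentQ :: "KL set" where
  "LaurentQ = {Fract p 1 * Xmon m | p m. \<forall>i j. coeff (coeff p i) j \<in> Qcyc}"

definition polyeval :: "KL \<Rightarrow> KL \<Rightarrow> complex poly poly \<Rightarrow> KL" where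
  "polyeval a b p = poly (map_poly (\<lambda>q. poly (map_poly (\<lambda>c. Fract [:[:c:]:] 1) q) a) p) b"

definition subst :: "KL \<Rightarrow> KL \<Rightarrow> KL \<Rightarrow> KL" where
  "subst a b r = (let (p, q) = (SOME (p, q). q \<noteq> 0 \<and> r = Fract p q)
                  in polyeval a b p / polyeval a b q)"

text \<open>mu_v^*(X^m) = X^m (1 + X^{omega(.,v)})^{-(m,v)}, determined by its values on x1, x2.\<close>
definition mu :: "int \<Rightarrow> lat \<Rightarrow> KL \<Rightarrow> KL" where
  "mu k v = subst
     (Xmon (1,0) * (1 + Xmon (omega_dual k v)) powi (- pairing (1,0) v))
     (Xmon (0,1) * (1 + Xmon (omega_dual k v)) powi (- pairing (0,1) v))"

text \<open>Exchange collections as finite lists of vectors; multiplicity function.\<close>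
definition mult :: "lat list \<Rightarrow> lat \<Rightarrow> nat" where
  "mult V v = length (filter (\<lambda>u. u = v) V)"

definition upper_bound :: "int \<Rightarrow> lat list \<Rightarrow> KL set" where
  "upper_bound k V = LaurentQ \<inter> (\<Inter>v. (mu k v ^^ mult V v) ` LaurentQ)"

end

theory Submission
  imports Defs "HOL-Computational_Algebra.Polynomial_Factorial"
begin

(* Both mutations in the directions +e2 and -e2 fix x1 and rescale x2 by a nonzero element of C(x1):
   mu_{e2} is x2 |-> x2 / D and mu_{-e2} is x2 |-> x2 D x1^(-k), where D = 1 + x1^k, and composing
   rescalings multiplies the factors.  A Laurent polynomial is a finite sum of r_n x2^n with
   r_n in Qcyc[x1, 1/x1]; rescaling x2 by w multiplies r_n by w^n, and since x2 is transcendental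
   over C(x1) the result is again Laurent iff every r_n w^n is.  Hence rescalings by monomials
   x1^c preserve Laurent polynomials, and if g and its rescaling by D^(-m) are Laurent then so is
   its rescaling by D^(-j) for every j <= m: for n >= 0 multiply the coefficient by D^((m-j)n),
   for n < 0 the factor D^(j|n|) is Laurent anyway.  As D^(-1) * D x1^(-k) = x1^(-k) is a monomial,
   this converts membership in one side of the identity into membership in the other. *)

section \<open>Evaluation of polynomials in x2\<close>

lemma to_fract_power [simp]: "to_fract (x ^ n) = to_fract x ^ n"
  by (induct n) simp_all

definition of_x1poly :: "complex poly \<Rightarrow> KL" where
  "of_x1poly q = to_fract [:q:]"

lemma of_x1poly_add [simp]: "of_x1poly (p + q) = of_x1poly p + of_x1poly q"
  by (simp add: of_x1poly_def flip: to_fract_add)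

lemma of_x1poly_mult [simp]: "of_x1poly (p * q) = of_x1poly p * of_x1poly q"
  by (simp add: of_x1poly_def flip: to_fract_mult)

lemma of_x1poly_uminus [simp]: "of_x1poly (- p) = - of_x1poly p"
  by (simp add: of_x1poly_def flip: to_fract_uminus)

lemma of_x1poly_0 [simp]: "of_x1poly 0 = 0"
  by (simp add: of_x1poly_def)

lemma of_x1poly_1 [simp]: "of_x1poly 1 = 1"
  by (simp add: of_x1poly_def pCons_one)

lemma of_x1poly_eq_0_iff [simp]: "of_x1poly p = 0 \<longleftrightarrow> p = 0"
  by (simp add: of_x1poly_def)

lemma of_x1poly_power [simp]: "of_x1poly (p ^ n) = of_x1poly p ^ n"
  by (induct n) simp_all

lemma X1_eq: "X1 = of_x1poly [:0, 1:]"
  by (simp add: X1_def of_x1poly_def to_fract_def)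

lemma X2_eq: "X2 = to_fract [:0, 1:]"
  by (simp add: X2_def to_fract_def)

lemma X1_nonzero [simp]: "X1 \<noteq> 0" and X2_nonzero [simp]: "X2 \<noteq> 0"
  by (simp_all add: X1_eq X2_eq)

lemma poly_map_poly_hom:
  fixes h :: "'a::comm_ring_1 \<Rightarrow> 'b::comm_ring_1"
  assumes "\<And>x y. h (x + y) = h x + h y" "\<And>x y. h (x * y) = h x * h y" "h 0 = 0"
  shows "h (poly p x) = poly (map_poly h p) (h x)"
  by (induct p rule: pCons_induct) (simp_all add: assms map_poly_pCons)

lemma map_poly_add_hom:
  assumes "\<And>x y. h (x + y) = h x + h y" "h 0 = 0"
  shows "map_poly h (p + q) = map_poly h p + map_poly h q"
  by (intro poly_eqI) (simp add: coeff_map_poly assms)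

lemma map_poly_mult_hom:
  fixes h :: "'a::comm_ring_1 \<Rightarrow> 'b::comm_ring_1"
  assumes "\<And>x y. h (x + y) = h x + h y" "\<And>x y. h (x * y) = h x * h y" "h 0 = 0"
  shows "map_poly h (p * q) = map_poly h p * map_poly h q"
proof (induct p rule: pCons_induct)
  case (pCons a p)
  have "map_poly h (pCons a p * q) = map_poly h (smult a q + pCons 0 (p * q))"
    by simp
  also have "\<dots> = map_poly h (pCons a p) * map_poly h q"
    by (simp add: map_poly_add_hom assms map_poly_smult map_poly_pCons pCons.hyps)
  finally show ?case .
qed (simp add: assms)

definition eval_x2 :: "KL \<Rightarrow> complex poly poly \<Rightarrow> KL" where
  "eval_x2 b p = poly (map_poly of_x1poly p) b"

lemma eval_x2_add [simp]: "eval_x2 b (p + q) = eval_x2 b p + eval_x2 b q"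
  by (simp add: eval_x2_def map_poly_add_hom)

lemma eval_x2_mult [simp]: "eval_x2 b (p * q) = eval_x2 b p * eval_x2 b q"
  by (simp add: eval_x2_def map_poly_mult_hom)

lemma eval_x2_0 [simp]: "eval_x2 b 0 = 0"
  by (simp add: eval_x2_def)

lemma eval_x2_1 [simp]: "eval_x2 b 1 = 1"
  by (simp add: eval_x2_def)

lemma eval_x2_pCons [simp]: "eval_x2 b (pCons a p) = of_x1poly a + b * eval_x2 b p"
  by (simp add: eval_x2_def map_poly_pCons)

lemma eval_x2_X2: "eval_x2 X2 p = to_fract p"
proof (induct p rule: pCons_induct)
  case (pCons a p)
  have "pCons a p = [:a:] + [:0, 1:] * p"
    by simp
  then have "to_fract (pCons a p) = to_fract [:a:] + to_fract [:0, 1:] * to_fract p"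
    by (metis to_fract_add to_fract_mult)
  then show ?case
    using pCons by (simp add: X2_eq of_x1poly_def)
qed (simp add: eval_x2_def)

lemma eval_x2_conv_sum: "eval_x2 b p = (\<Sum>i\<le>degree p. of_x1poly (coeff p i) * b ^ i)"
  by (simp add: eval_x2_def poly_altdef coeff_map_poly degree_map_poly)

lemma polyeval_X1: "polyeval X1 b p = eval_x2 b p"
proof -
  have "poly (map_poly (\<lambda>c. of_x1poly [:c:]) q) X1 = of_x1poly q" for q
  proof (induct q rule: pCons_induct)
    case (pCons a q)
    have "pCons a q = [:a:] + [:0, 1:] * q"
      by simp
    then have "of_x1poly (pCons a q) = of_x1poly [:a:] + X1 * of_x1poly q"
      by (metis X1_eq of_x1poly_add of_x1poly_mult)
    then show ?case
      using pCons by (simp add: map_poly_pCons)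
  qed simp
  moreover have "(\<lambda>c. Fract [:[:c:]:] 1) = (\<lambda>c. of_x1poly [:c:])"
    by (simp add: of_x1poly_def to_fract_def)
  ultimately show ?thesis
    by (simp add: polyeval_def eval_x2_def)
qed

section \<open>The subfield C(x1) and transcendence of x2\<close>

definition ratfun_x1 :: "KL set" where
  "ratfun_x1 = {of_x1poly a / of_x1poly b | a b. b \<noteq> 0}"

lemma ratfun_x1_fraction: "b \<noteq> 0 \<Longrightarrow> of_x1poly a / of_x1poly b \<in> ratfun_x1"
  unfolding ratfun_x1_def by blast

lemma ratfun_x1_cases:
  assumes "x \<in> ratfun_x1"
  obtains a b where "b \<noteq> 0" "x = of_x1poly a / of_x1poly b"
  using assms unfolding ratfun_x1_def by blast

lemma of_x1poly_in_ratfun_x1 [simp]: "of_x1poly a \<in> ratfun_x1"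
  using ratfun_x1_fraction[of 1 a] by simp

lemma ratfun_x1_0 [simp]: "0 \<in> ratfun_x1" and ratfun_x1_1 [simp]: "1 \<in> ratfun_x1"
  using of_x1poly_in_ratfun_x1[of 0] of_x1poly_in_ratfun_x1[of 1] by simp_all

lemma X1_in_ratfun_x1 [simp]: "X1 \<in> ratfun_x1"
  by (simp add: X1_eq)

lemma ratfun_x1_add [simp]:
  assumes "x \<in> ratfun_x1" "y \<in> ratfun_x1"
  shows "x + y \<in> ratfun_x1"
proof -
  obtain a b a' b' where "b \<noteq> 0" "b' \<noteq> 0" "x = of_x1poly a / of_x1poly b" "y = of_x1poly a' / of_x1poly b'"
    using assms by (elim ratfun_x1_cases)
  then have "x + y = of_x1poly (a * b' + a' * b) / of_x1poly (b * b')" "b * b' \<noteq> 0"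
    by (simp_all add: field_simps)
  then show ?thesis
    by (metis ratfun_x1_fraction)
qed

lemma ratfun_x1_uminus [simp]:
  assumes "x \<in> ratfun_x1"
  shows "- x \<in> ratfun_x1"
proof -
  obtain a b where "b \<noteq> 0" "x = of_x1poly a / of_x1poly b"
    using assms by (elim ratfun_x1_cases)
  then have "- x = of_x1poly (- a) / of_x1poly b" "b \<noteq> 0"
    by simp_all
  then show ?thesis
    by (metis ratfun_x1_fraction)
qed

lemma ratfun_x1_diff [simp]: "x \<in> ratfun_x1 \<Longrightarrow> y \<in> ratfun_x1 \<Longrightarrow> x - y \<in> ratfun_x1"
  by (metis diff_conv_add_uminus ratfun_x1_add ratfun_x1_uminus)

lemma ratfun_x1_mult [simp]:
  assumes "x \<in> ratfun_x1" "y \<in> ratfun_x1"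
  shows "x * y \<in> ratfun_x1"
proof -
  obtain a b a' b' where "b \<noteq> 0" "b' \<noteq> 0" "x = of_x1poly a / of_x1poly b" "y = of_x1poly a' / of_x1poly b'"
    using assms by (elim ratfun_x1_cases)
  then have "x * y = of_x1poly (a * a') / of_x1poly (b * b')" "b * b' \<noteq> 0"
    by simp_all
  then show ?thesis
    by (metis ratfun_x1_fraction)
qed

lemma ratfun_x1_inverse [simp]:
  assumes "x \<in> ratfun_x1"
  shows "inverse x \<in> ratfun_x1"
proof -
  obtain a b where "b \<noteq> 0" "x = of_x1poly a / of_x1poly b"
    using assms by (elim ratfun_x1_cases)
  then show ?thesis
    by (cases "a = 0") (simp_all add: ratfun_x1_fraction)
qed

lemma ratfun_x1_divide [simp]: "x \<in> ratfun_x1 \<Longrightarrow> y \<in> ratfun_x1 \<Longrightarrow> x / y \<in> ratfun_x1"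
  by (simp add: divide_inverse)

lemma ratfun_x1_power [simp]: "x \<in> ratfun_x1 \<Longrightarrow> x ^ n \<in> ratfun_x1"
  by (induct n) simp_all

lemma ratfun_x1_power_int [simp]: "x \<in> ratfun_x1 \<Longrightarrow> x powi n \<in> ratfun_x1"
  by (simp add: power_int_def)

lemma ratfun_x1_common_denominator:
  assumes "finite B" "\<And>i. i \<in> B \<Longrightarrow> s i \<in> ratfun_x1"
  obtains d e where "d \<noteq> 0" "\<And>i. i \<in> B \<Longrightarrow> s i * of_x1poly d = of_x1poly (e i)"
proof -
  have "\<exists>d e. d \<noteq> 0 \<and> (\<forall>i\<in>B. s i * of_x1poly d = of_x1poly (e i))"
    using assms
  proof (induct B rule: finite_induct)
    case empty
    show ?case
      by (intro exI[of _ 1]) simp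
  next
    case (insert x F)
    then obtain d e where de: "d \<noteq> 0" "\<forall>i\<in>F. s i * of_x1poly d = of_x1poly (e i)"
      by auto
    obtain a b where ab: "b \<noteq> 0" "s x = of_x1poly a / of_x1poly b"
      using insert(4) by (meson insertI1 ratfun_x1_cases)
    define e' where "e' i = (if i = x then a * d else e i * b)" for i
    have "\<forall>i\<in>insert x F. s i * of_x1poly (d * b) = of_x1poly (e' i)"
    proof
      fix i assume "i \<in> insert x F"
      then show "s i * of_x1poly (d * b) = of_x1poly (e' i)"
        using de ab by (cases "i = x") (auto simp: e'_def mult.assoc[symmetric])
    qed
    moreover have "d * b \<noteq> 0"
      using de ab by simp
    ultimately show ?case
      by (intro exI[of _ "d * b"] exI[of _ e']) simp
  qed
  then show ?thesis
    using that by metis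
qed

lemma x2_powers_independent:
  assumes "finite B" "\<And>i. i \<in> B \<Longrightarrow> s i \<in> ratfun_x1" "(\<Sum>i\<in>B. s i * X2 ^ i) = 0"
    and "j \<in> B"
  shows "s j = 0"
proof -
  obtain d e where de: "d \<noteq> 0" "\<And>i. i \<in> B \<Longrightarrow> s i * of_x1poly d = of_x1poly (e i)"
    using ratfun_x1_common_denominator assms(1,2) by blast
  have monom: "of_x1poly c * X2 ^ i = to_fract (monom c i)" for c i
  proof -
    have "monom c i = [:c:] * [:0, 1:] ^ i"
      by (simp add: monom_altdef)
    then show ?thesis
      by (metis X2_eq of_x1poly_def to_fract_mult to_fract_power)
  qed
  have "to_fract (\<Sum>i\<in>B. monom (e i) i) = (\<Sum>i\<in>B. of_x1poly (e i) * X2 ^ i)"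
    by (simp only: to_fract_sum monom)
  also have "\<dots> = (\<Sum>i\<in>B. s i * X2 ^ i) * of_x1poly d"
    unfolding sum_distrib_right by (rule sum.cong) (simp_all add: ac_simps flip: de(2))
  finally have "(\<Sum>i\<in>B. monom (e i) i) = 0"
    using assms(3) by (simp only: mult_zero_left to_fract_eq_0_iff)
  then have "coeff (\<Sum>i\<in>B. monom (e i) i) j = 0"
    by simp
  then have "e j = 0"
    using assms(1,4) by (simp add: coeff_sum)
  then show ?thesis
    using de assms(4) by (metis mult_eq_0_iff of_x1poly_eq_0_iff)
qed

lemma power_int_shift:
  fixes x :: "'a::division_ring"
  assumes "x \<noteq> 0" "a \<le> n"
  shows "x powi n = x powi a * x ^ nat (n - a)"
  using assms by (simp flip: power_int_of_nat power_int_add)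

lemma x2_powi_independent:
  assumes "finite A" "\<And>n. n \<in> A \<Longrightarrow> r n \<in> ratfun_x1" "(\<Sum>n\<in>A. r n * X2 powi n) = 0"
    and "m \<in> A"
  shows "r m = 0"
proof -
  define b where "b = Min A"
  have b_le: "b \<le> n" if "n \<in> A" for n
    using assms(1) that by (simp add: b_def)
  define h where "h n = nat (n - b)" for n
  have inj: "inj_on h A"
  proof (rule inj_onI)
    fix x y assume "x \<in> A" "y \<in> A" "h x = h y"
    then show "x = y"
      using b_le[of x] b_le[of y] by (simp add: h_def)
  qed
  have r_h: "r n = r (int (h n) + b)" if "n \<in> A" for n
    using b_le[OF that] by (simp add: h_def)
  have "X2 powi n = X2 powi b * X2 ^ h n" if "n \<in> A" for n
    unfolding h_def by (rule power_int_shift[OF X2_nonzero b_le[OF that]])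
  then have "(\<Sum>n\<in>A. r n * X2 powi n) = X2 powi b * (\<Sum>n\<in>A. r (int (h n) + b) * X2 ^ h n)"
    unfolding sum_distrib_left by (intro sum.cong) (simp_all add: r_h)
  also have "(\<Sum>n\<in>A. r (int (h n) + b) * X2 ^ h n) = (\<Sum>i\<in>h ` A. r (int i + b) * X2 ^ i)"
    by (simp add: sum.reindex[OF inj])
  finally have "(\<Sum>n\<in>A. r n * X2 powi n) = X2 powi b * (\<Sum>i\<in>h ` A. r (int i + b) * X2 ^ i)" .
  then have zero: "(\<Sum>i\<in>h ` A. r (int i + b) * X2 ^ i) = 0"
    using assms(3) by simp
  have mem: "r (int i + b) \<in> ratfun_x1" if "i \<in> h ` A" for i
    using that assms(2) r_h by auto
  have "r (int (h m) + b) = 0"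
    using x2_powers_independent[OF finite_imageI[OF assms(1)] mem zero] assms(4) by simp
  then show ?thesis
    using r_h assms(4) by simp
qed

lemma eval_x2_scaled_nonzero:
  assumes "w \<in> ratfun_x1" "w \<noteq> 0" "p \<noteq> 0"
  shows "eval_x2 (X2 * w) p \<noteq> 0"
proof
  assume "eval_x2 (X2 * w) p = 0"
  then have "(\<Sum>i\<le>degree p. (of_x1poly (coeff p i) * w ^ i) * X2 ^ i) = 0"
    by (simp add: eval_x2_conv_sum power_mult_distrib ac_simps)
  then have "of_x1poly (coeff p (degree p)) * w ^ degree p = 0"
    by (rule x2_powers_independent[of "{..degree p}", rotated 2]) (simp_all add: assms(1))
  then show False
    using assms by simp
qed

section \<open>Rescaling x2\<close>

definition scale_x2 :: "KL \<Rightarrow> KL \<Rightarrow> KL" where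
  "scale_x2 w = subst X1 (X2 * w)"

lemma scale_x2_Fract:
  assumes "w \<in> ratfun_x1" "w \<noteq> 0" "q \<noteq> 0"
  shows "scale_x2 w (Fract p q) = eval_x2 (X2 * w) p / eval_x2 (X2 * w) q"
proof -
  \<comment> \<open>subst evaluates an arbitrary representative; the denominators do not vanish, so the
    quotient does not depend on the choice.\<close>
  define pq where "pq = (SOME (p', q'). q' \<noteq> 0 \<and> Fract p q = Fract p' q')"
  have "snd pq \<noteq> 0 \<and> Fract p q = Fract (fst pq) (snd pq)"
    unfolding pq_def by (rule someI2[of _ "(p, q)"]) (use assms in auto)
  then have pq: "snd pq \<noteq> 0" "p * snd pq = fst pq * q"
    using assms(3) by (auto simp: eq_fract)
  have "scale_x2 w (Fract p q) = eval_x2 (X2 * w) (fst pq) / eval_x2 (X2 * w) (snd pq)"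
    unfolding scale_x2_def subst_def pq_def[symmetric] by (simp add: polyeval_X1 split: prod.splits)
  also have "\<dots> = eval_x2 (X2 * w) p / eval_x2 (X2 * w) q"
  proof -
    have "eval_x2 (X2 * w) q \<noteq> 0" "eval_x2 (X2 * w) (snd pq) \<noteq> 0"
      using eval_x2_scaled_nonzero assms pq(1) by auto
    moreover have "eval_x2 (X2 * w) p * eval_x2 (X2 * w) (snd pq) = eval_x2 (X2 * w) (fst pq) * eval_x2 (X2 * w) q"
      using pq(2) by (metis eval_x2_mult)
    ultimately show ?thesis
      by (simp add: frac_eq_eq)
  qed
  finally show ?thesis .
qed

context
  fixes w :: KL
  assumes w: "w \<in> ratfun_x1" "w \<noteq> 0"
begin

lemma scale_x2_to_fract: "scale_x2 w (to_fract p) = eval_x2 (X2 * w) p"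
  using scale_x2_Fract[OF w, of 1 p] by (simp add: to_fract_def)

lemma scale_x2_0 [simp]: "scale_x2 w 0 = 0"
  using scale_x2_to_fract[of 0] by simp

lemma scale_x2_1 [simp]: "scale_x2 w 1 = 1"
  using scale_x2_to_fract[of 1] by simp

lemma scale_x2_add [simp]: "scale_x2 w (x + y) = scale_x2 w x + scale_x2 w y"
proof (cases x; cases y)
  fix p q p' q'
  assume "x = Fract p q" "q \<noteq> 0" "y = Fract p' q'" "q' \<noteq> 0"
  then show ?thesis
    using eval_x2_scaled_nonzero[OF w] by (simp add: scale_x2_Fract[OF w] add_frac_eq)
qed

lemma scale_x2_mult [simp]: "scale_x2 w (x * y) = scale_x2 w x * scale_x2 w y"
proof (cases x; cases y)
  fix p q p' q'
  assume "x = Fract p q" "q \<noteq> 0" "y = Fract p' q'" "q' \<noteq> 0"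
  then show ?thesis
    by (simp add: scale_x2_Fract[OF w])
qed

lemma scale_x2_inverse [simp]: "scale_x2 w (inverse x) = inverse (scale_x2 w x)"
proof (cases x)
  fix p q
  assume "x = Fract p q" "q \<noteq> 0"
  then show ?thesis
    by (cases "p = 0") (simp_all add: scale_x2_Fract[OF w] fract_collapse)
qed

lemma scale_x2_divide [simp]: "scale_x2 w (x / y) = scale_x2 w x / scale_x2 w y"
  by (simp add: divide_inverse)

lemma scale_x2_power [simp]: "scale_x2 w (x ^ n) = scale_x2 w x ^ n"
  by (induct n) simp_all

lemma scale_x2_power_int [simp]: "scale_x2 w (x powi n) = scale_x2 w x powi n"
  by (simp add: power_int_def)

lemma scale_x2_sum: "scale_x2 w (sum f A) = (\<Sum>a\<in>A. scale_x2 w (f a))"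
  by (induct A rule: infinite_finite_induct) simp_all

lemma scale_x2_of_x1poly [simp]: "scale_x2 w (of_x1poly a) = of_x1poly a"
  using scale_x2_to_fract[of "[:a:]"] by (simp add: of_x1poly_def)

lemma scale_x2_ratfun_x1 [simp]: "x \<in> ratfun_x1 \<Longrightarrow> scale_x2 w x = x"
  by (elim ratfun_x1_cases) simp

lemma scale_x2_X2 [simp]: "scale_x2 w X2 = X2 * w"
  by (simp add: X2_eq scale_x2_to_fract eval_x2_def map_poly_pCons)

lemma scale_x2_eval_x2:
  assumes "v \<in> ratfun_x1"
  shows "scale_x2 w (eval_x2 (X2 * v) p) = eval_x2 (X2 * (w * v)) p"
proof -
  have "scale_x2 w (eval_x2 (X2 * v) p) = poly (map_poly (scale_x2 w) (map_poly of_x1poly p)) (scale_x2 w (X2 * v))"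
    unfolding eval_x2_def by (rule poly_map_poly_hom) simp_all
  also have "map_poly (scale_x2 w) (map_poly of_x1poly p) = map_poly of_x1poly p"
    by (simp add: map_poly_map_poly o_def)
  finally show ?thesis
    using assms by (simp add: eval_x2_def ac_simps)
qed

end

lemma scale_x2_scale_x2:
  assumes "u \<in> ratfun_x1" "u \<noteq> 0" "v \<in> ratfun_x1" "v \<noteq> 0"
  shows "scale_x2 u (scale_x2 v x) = scale_x2 (u * v) x"
proof (cases x)
  fix p q
  assume "x = Fract p q" "q \<noteq> 0"
  then show ?thesis
    using assms by (simp add: scale_x2_Fract scale_x2_eval_x2)
qed

lemma scale_x2_scale_x2_eq:
  assumes "u \<in> ratfun_x1" "u \<noteq> 0" "v \<in> ratfun_x1" "v \<noteq> 0" "u * v = w"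
  shows "scale_x2 u (scale_x2 v x) = scale_x2 w x"
  using scale_x2_scale_x2[OF assms(1-4)] assms(5) by simp

lemma scale_x2_one [simp]: "scale_x2 1 x = x"
proof (cases x)
  fix p q
  assume "x = Fract p q" "q \<noteq> 0"
  then show ?thesis
    by (simp add: Fract_conv_to_fract scale_x2_to_fract eval_x2_X2)
qed

lemma funpow_scale_x2:
  assumes "w \<in> ratfun_x1" "w \<noteq> 0"
  shows "scale_x2 w ^^ n = scale_x2 (w ^ n)"
  by (induct n) (auto simp: assms scale_x2_scale_x2 fun_eq_iff)

section \<open>Laurent polynomials\<close>

locale semiring_closed =
  fixes S :: "'a::comm_semiring_1 set"
  assumes zero_mem [simp]: "0 \<in> S" and one_mem [simp]: "1 \<in> S"
    and add_mem [simp]: "x \<in> S \<Longrightarrow> y \<in> S \<Longrightarrow> x + y \<in> S"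
    and mult_mem [simp]: "x \<in> S \<Longrightarrow> y \<in> S \<Longrightarrow> x * y \<in> S"
begin

lemma sum_mem: "(\<And>i. i \<in> A \<Longrightarrow> f i \<in> S) \<Longrightarrow> sum f A \<in> S"
  by (induct A rule: infinite_finite_induct) simp_all

lemma power_mem [simp]: "x \<in> S \<Longrightarrow> x ^ n \<in> S"
  by (induct n) simp_all

end

definition poly_over :: "'a::zero set \<Rightarrow> 'a poly set" where
  "poly_over S = {p. \<forall>i. coeff p i \<in> S}"

lemma pCons_in_poly_over [simp]: "a \<in> S \<Longrightarrow> p \<in> poly_over S \<Longrightarrow> pCons a p \<in> poly_over S"
  by (simp add: poly_over_def coeff_pCons split: nat.split)

lemma (in semiring_closed) semiring_closed_poly_over: "semiring_closed (poly_over S)"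
  by unfold_locales (auto simp: poly_over_def coeff_1 coeff_mult intro: sum_mem)

lemma semiring_closed_Qcyc: "semiring_closed Qcyc"
  by unfold_locales (auto simp: Qcyc_def)

interpretation Qcyc: semiring_closed Qcyc
  by (rule semiring_closed_Qcyc)

interpretation Qcyc_poly: semiring_closed "poly_over Qcyc"
  by (rule Qcyc.semiring_closed_poly_over)

interpretation Qcyc_poly_poly: semiring_closed "poly_over (poly_over Qcyc)"
  by (rule Qcyc_poly.semiring_closed_poly_over)

definition Laurent_x1 :: "KL set" where
  "Laurent_x1 = {of_x1poly q * X1 powi a | q a. q \<in> poly_over Qcyc}"

lemma Laurent_x1I: "q \<in> poly_over Qcyc \<Longrightarrow> of_x1poly q * X1 powi a \<in> Laurent_x1"
  unfolding Laurent_x1_def by blast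

lemma Laurent_x1E:
  assumes "x \<in> Laurent_x1"
  obtains q a where "q \<in> poly_over Qcyc" "x = of_x1poly q * X1 powi a"
  using assms unfolding Laurent_x1_def by blast

lemma Laurent_x1_imp_ratfun_x1: "x \<in> Laurent_x1 \<Longrightarrow> x \<in> ratfun_x1"
  by (auto elim!: Laurent_x1E)

lemma Laurent_x1_0 [simp]: "0 \<in> Laurent_x1"
  using Laurent_x1I[of 0 0] by simp

lemma X1_power_int_in_Laurent_x1 [simp]: "X1 powi a \<in> Laurent_x1"
  using Laurent_x1I[of 1 a] by simp

lemma Laurent_x1_mult [simp]:
  assumes "x \<in> Laurent_x1" "y \<in> Laurent_x1"
  shows "x * y \<in> Laurent_x1"
proof -
  obtain q a q' a' where "q \<in> poly_over Qcyc" "q' \<in> poly_over Qcyc"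
    "x = of_x1poly q * X1 powi a" "y = of_x1poly q' * X1 powi a'"
    using assms by (elim Laurent_x1E)
  then show ?thesis
    using Laurent_x1I[of "q * q'" "a + a'"] by (simp add: power_int_add ac_simps)
qed

lemma Laurent_x1_power [simp]: "x \<in> Laurent_x1 \<Longrightarrow> x ^ n \<in> Laurent_x1"
  by (induct n) (simp_all add: Laurent_x1I[of 1 0, simplified])

lemma LaurentQ_eq:
  "LaurentQ = {to_fract p * X1 powi a * X2 powi b | p a b. p \<in> poly_over (poly_over Qcyc)}"
  unfolding LaurentQ_def poly_over_def Xmon_def to_fract_def by (auto simp: mult.assoc)

lemma LaurentQI:
  "p \<in> poly_over (poly_over Qcyc) \<Longrightarrow> to_fract p * X1 powi a * X2 powi b \<in> LaurentQ"
  unfolding LaurentQ_eq by blast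

lemma LaurentQE:
  assumes "x \<in> LaurentQ"
  obtains p a b where "p \<in> poly_over (poly_over Qcyc)" "x = to_fract p * X1 powi a * X2 powi b"
  using assms unfolding LaurentQ_eq by blast

lemma Laurent_x1_imp_LaurentQ: "x \<in> Laurent_x1 \<Longrightarrow> x \<in> LaurentQ"
  by (auto elim!: Laurent_x1E intro!: LaurentQI[of _ _ 0, simplified] simp: of_x1poly_def)

lemma X2_power_int_in_LaurentQ [simp]: "X2 powi n \<in> LaurentQ"
  using LaurentQI[of 1 0 n] by simp

lemma LaurentQ_0 [simp]: "0 \<in> LaurentQ"
  using Laurent_x1_imp_LaurentQ[OF Laurent_x1_0] .

lemma LaurentQ_mult [simp]:
  assumes "x \<in> LaurentQ" "y \<in> LaurentQ"
  shows "x * y \<in> LaurentQ"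
proof -
  obtain p a b p' a' b' where "p \<in> poly_over (poly_over Qcyc)" "p' \<in> poly_over (poly_over Qcyc)"
    "x = to_fract p * X1 powi a * X2 powi b" "y = to_fract p' * X1 powi a' * X2 powi b'"
    using assms by (elim LaurentQE)
  then show ?thesis
    using LaurentQI[of "p * p'" "a + a'" "b + b'"] by (simp add: power_int_add ac_simps)
qed

lemma LaurentQ_add [simp]:
  assumes "x \<in> LaurentQ" "y \<in> LaurentQ"
  shows "x + y \<in> LaurentQ"
proof -
  obtain p a b p' a' b' where pp': "p \<in> poly_over (poly_over Qcyc)" "p' \<in> poly_over (poly_over Qcyc)"
    and xy: "x = to_fract p * X1 powi a * X2 powi b" "y = to_fract p' * X1 powi a' * X2 powi b'"
    using assms by (elim LaurentQE)
  define a0 where "a0 = min a a'"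
  define b0 where "b0 = min b b'"
  define X1' X2' :: "complex poly poly" where "X1' = [:[:0, 1:]:]" and "X2' = [:0, 1:]"
  define P where "P = p * X1' ^ nat (a - a0) * X2' ^ nat (b - b0) + p' * X1' ^ nat (a' - a0) * X2' ^ nat (b' - b0)"
  have "to_fract X1' = X1" "to_fract X2' = X2"
    by (simp_all add: X1'_def X2'_def X1_eq X2_eq of_x1poly_def)
  moreover have "a0 \<le> a" "a0 \<le> a'" "b0 \<le> b" "b0 \<le> b'"
    by (simp_all add: a0_def b0_def)
  ultimately have "x + y = to_fract P * X1 powi a0 * X2 powi b0"
    unfolding xy P_def
    by (simp add: power_int_shift[of X1 a0 a] power_int_shift[of X1 a0 a'] power_int_shift[of X2 b0 b]
        power_int_shift[of X2 b0 b'] algebra_simps)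
  moreover have "P \<in> poly_over (poly_over Qcyc)"
    using pp' by (simp add: P_def X1'_def X2'_def)
  ultimately show ?thesis
    by (simp add: LaurentQI)
qed

lemma LaurentQ_sum: "(\<And>i. i \<in> A \<Longrightarrow> f i \<in> LaurentQ) \<Longrightarrow> sum f A \<in> LaurentQ"
  by (induct A rule: infinite_finite_induct) simp_all

lemma LaurentQ_iff_x2_expansion:
  "x \<in> LaurentQ \<longleftrightarrow> (\<exists>A r. finite A \<and> (\<forall>n. r n \<in> Laurent_x1) \<and> x = (\<Sum>n\<in>A. r n * X2 powi n))"
proof
  assume "x \<in> LaurentQ"
  then obtain p a b where p: "p \<in> poly_over (poly_over Qcyc)" and x: "x = to_fract p * X1 powi a * X2 powi b"
    by (elim LaurentQE)
  define h where "h i = int i + b" for i :: nat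
  define r where "r n = of_x1poly (coeff p (nat (n - b))) * X1 powi a" for n
  have inj: "inj_on h {..degree p}"
    by (simp add: h_def inj_on_def)
  have r: "\<forall>n. r n \<in> Laurent_x1"
    using p by (auto simp: r_def poly_over_def intro: Laurent_x1I)
  have "x = (\<Sum>i\<le>degree p. of_x1poly (coeff p i) * X2 ^ i) * X1 powi a * X2 powi b"
    by (simp add: x flip: eval_x2_X2 eval_x2_conv_sum)
  also have "\<dots> = (\<Sum>i\<le>degree p. r (h i) * X2 powi (h i))"
    unfolding sum_distrib_right
    by (rule sum.cong) (simp_all add: r_def h_def power_int_add ac_simps flip: power_int_of_nat)
  also have "\<dots> = (\<Sum>n\<in>h ` {..degree p}. r n * X2 powi n)"
    by (simp add: sum.reindex[OF inj])
  finally show "\<exists>A r. finite A \<and> (\<forall>n. r n \<in> Laurent_x1) \<and> x = (\<Sum>n\<in>A. r n * X2 powi n)"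
    using r by blast
qed (auto intro!: LaurentQ_sum LaurentQ_mult simp: Laurent_x1_imp_LaurentQ)

lemma scale_x2_x2_expansion:
  assumes "w \<in> ratfun_x1" "w \<noteq> 0" "\<And>n. n \<in> A \<Longrightarrow> r n \<in> ratfun_x1"
  shows "scale_x2 w (\<Sum>n\<in>A. r n * X2 powi n) = (\<Sum>n\<in>A. (r n * w powi n) * X2 powi n)"
  using assms by (simp add: scale_x2_sum power_int_mult_distrib ac_simps cong: sum.cong)

lemma x2_expansion_coeff_unique:
  assumes "finite A" "finite A'" "\<And>n. r n \<in> ratfun_x1" "\<And>n. r' n \<in> ratfun_x1"
    and "(\<Sum>n\<in>A. r n * X2 powi n) = (\<Sum>n\<in>A'. r' n * X2 powi n)" and "m \<in> A"
  shows "r m = (if m \<in> A' then r' m else 0)"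
proof -
  define B where "B = A \<union> A'"
  define d where "d n = (if n \<in> A then r n else 0) - (if n \<in> A' then r' n else 0)" for n
  have restrict: "(\<Sum>n\<in>B. (if n \<in> C then f n else 0) * X2 powi n) = (\<Sum>n\<in>C. f n * X2 powi n)"
    if "C \<subseteq> B" for C and f :: "int \<Rightarrow> KL"
  proof -
    have "(\<Sum>n\<in>B. (if n \<in> C then f n else 0) * X2 powi n) = (\<Sum>n\<in>B. if n \<in> C then f n * X2 powi n else 0)"
      by (rule sum.cong) simp_all
    also have "\<dots> = (\<Sum>n\<in>B \<inter> C. f n * X2 powi n)"
      using assms(1,2) by (simp add: B_def sum.inter_restrict)
    finally show ?thesis
      using that by (simp add: Int_absorb1)
  qed
  have "(\<Sum>n\<in>B. d n * X2 powi n) = 0"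
    using assms(5) restrict[of A r] restrict[of A' r'] by (simp add: d_def left_diff_distrib sum_subtractf B_def)
  then have "d m = 0"
    by (rule x2_powi_independent[of B, rotated 2]) (simp_all add: B_def d_def assms)
  then show ?thesis
    using assms(6) by (simp add: d_def)
qed

lemma scale_x2_in_LaurentQ_iff:
  assumes w: "w \<in> ratfun_x1" "w \<noteq> 0" and A: "finite A" and r: "\<And>n. r n \<in> Laurent_x1"
  shows "scale_x2 w (\<Sum>n\<in>A. r n * X2 powi n) \<in> LaurentQ \<longleftrightarrow> (\<forall>n\<in>A. r n * w powi n \<in> Laurent_x1)"
proof -
  have r_ratfun: "r n * w powi n \<in> ratfun_x1" for n
    using r w by (simp add: Laurent_x1_imp_ratfun_x1)
  have scaled: "scale_x2 w (\<Sum>n\<in>A. r n * X2 powi n) = (\<Sum>n\<in>A. (r n * w powi n) * X2 powi n)"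
    by (rule scale_x2_x2_expansion[OF w]) (simp add: r Laurent_x1_imp_ratfun_x1)
  show ?thesis
  proof
    assume "scale_x2 w (\<Sum>n\<in>A. r n * X2 powi n) \<in> LaurentQ"
    then obtain A' r' where A': "finite A'" "\<And>n. r' n \<in> Laurent_x1"
      and eq: "(\<Sum>n\<in>A. (r n * w powi n) * X2 powi n) = (\<Sum>n\<in>A'. r' n * X2 powi n)"
      unfolding scaled LaurentQ_iff_x2_expansion by blast
    show "\<forall>n\<in>A. r n * w powi n \<in> Laurent_x1"
    proof
      fix n assume "n \<in> A"
      then have "r n * w powi n = (if n \<in> A' then r' n else 0)"
        using x2_expansion_coeff_unique[of A A' "\<lambda>n. r n * w powi n" r', OF A A'(1) r_ratfun _ eq]
          A'(2) Laurent_x1_imp_ratfun_x1 by blast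
      then show "r n * w powi n \<in> Laurent_x1"
        using A' by simp
    qed
  next
    assume coeffs: "\<forall>n\<in>A. r n * w powi n \<in> Laurent_x1"
    define r' where "r' n = (if n \<in> A then r n * w powi n else 0)" for n
    have "scale_x2 w (\<Sum>n\<in>A. r n * X2 powi n) = (\<Sum>n\<in>A. r' n * X2 powi n)"
      by (simp add: scaled r'_def)
    moreover have "\<forall>n. r' n \<in> Laurent_x1"
      using coeffs by (simp add: r'_def)
    ultimately show "scale_x2 w (\<Sum>n\<in>A. r n * X2 powi n) \<in> LaurentQ"
      using A unfolding LaurentQ_iff_x2_expansion by blast
  qed
qed

lemma scale_x2_X1_power_int_LaurentQ:
  assumes "g \<in> LaurentQ"
  shows "scale_x2 (X1 powi c) g \<in> LaurentQ"
proof -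
  obtain A r where "finite A" "\<And>n. r n \<in> Laurent_x1" "g = (\<Sum>n\<in>A. r n * X2 powi n)"
    using assms unfolding LaurentQ_iff_x2_expansion by blast
  then show ?thesis
    by (simp add: scale_x2_in_LaurentQ_iff flip: power_int_mult)
qed

lemma inverse_power_power_int:
  fixes D :: "'a::field"
  shows "(inverse D ^ j) powi n = D powi (- (int j * n))"
  by (simp add: power_int_mult power_int_minus power_int_inverse flip: power_inverse power_int_of_nat)

lemma Laurent_x1_mult_inverse_power_int:
  assumes D: "D \<in> Laurent_x1" "D \<noteq> 0" and r: "r \<in> Laurent_x1"
    and rm: "r * (inverse D ^ m) powi n \<in> Laurent_x1" and "j \<le> m"
  shows "r * (inverse D ^ j) powi n \<in> Laurent_x1"
proof (cases "n \<ge> 0")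
  case True
  have "(inverse D ^ j) powi n = D powi (- (int m * n) + int ((m - j) * nat n))"
    using True \<open>j \<le> m\<close> by (simp add: inverse_power_power_int of_nat_diff algebra_simps)
  also have "\<dots> = D powi (- (int m * n)) * D powi int ((m - j) * nat n)"
    by (rule power_int_add) (use D(2) in simp)
  also have "\<dots> = (inverse D ^ m) powi n * D ^ ((m - j) * nat n)"
    by (simp only: inverse_power_power_int power_int_of_nat)
  finally show ?thesis
    using rm D(1) by (simp add: mult.assoc[symmetric])
next
  case False
  then have "(inverse D ^ j) powi n = D powi int (j * nat (- n))"
    by (simp add: inverse_power_power_int)
  then have "(inverse D ^ j) powi n = D ^ (j * nat (- n))"
    by (simp only: power_int_of_nat)
  then show ?thesis
    using r D(1) by simp
qed

lemma scale_x2_inverse_power_LaurentQ: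
  assumes D: "D \<in> Laurent_x1" "D \<noteq> 0" and g: "g \<in> LaurentQ"
    and gm: "scale_x2 (inverse D ^ m) g \<in> LaurentQ" and "j \<le> m"
  shows "scale_x2 (inverse D ^ j) g \<in> LaurentQ"
proof -
  obtain A r where A: "finite A" and r: "\<And>n. r n \<in> Laurent_x1" and g: "g = (\<Sum>n\<in>A. r n * X2 powi n)"
    using g unfolding LaurentQ_iff_x2_expansion by blast
  have iff: "scale_x2 (inverse D ^ i) g \<in> LaurentQ \<longleftrightarrow> (\<forall>n\<in>A. r n * (inverse D ^ i) powi n \<in> Laurent_x1)" for i
    unfolding g by (rule scale_x2_in_LaurentQ_iff[OF _ _ A r]) (use D in \<open>simp_all add: Laurent_x1_imp_ratfun_x1\<close>)
  show ?thesis
    using gm \<open>j \<le> m\<close> D r unfolding iff by (blast intro: Laurent_x1_mult_inverse_power_int)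
qed

section \<open>Mutations in the directions e2 and -e2\<close>

lemma one_plus_X1_power_int: "1 + X1 powi k = of_x1poly ([:0, 1:] ^ nat \<bar>k\<bar> + 1) * X1 powi min k 0"
proof (cases "k \<ge> 0")
  case True
  then show ?thesis
    by (simp add: X1_eq power_int_def)
next
  case False
  then have "X1 ^ nat \<bar>k\<bar> * X1 powi k = 1"
    by (simp add: power_int_def power_inverse)
  then show ?thesis
    using False by (simp add: X1_eq distrib_right)
qed

lemma one_plus_X1_power_int_in_Laurent_x1: "1 + X1 powi k \<in> Laurent_x1"
  unfolding one_plus_X1_power_int by (rule Laurent_x1I) simp

lemma one_plus_X1_power_int_nonzero: "1 + X1 powi k \<noteq> 0"
proof -
  have "poly ([:0, 1:] ^ nat \<bar>k\<bar> + 1) 0 \<noteq> (0::complex)"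
    by (cases "nat \<bar>k\<bar>") simp_all
  then have "[:0, 1:] ^ nat \<bar>k\<bar> + 1 \<noteq> (0::complex poly)"
    by (metis poly_0)
  then show ?thesis
    unfolding one_plus_X1_power_int by (simp del: of_x1poly_add of_x1poly_power)
qed

definition scaled_upper_bound :: "KL \<Rightarrow> int \<Rightarrow> nat \<Rightarrow> nat \<Rightarrow> KL set" where
  "scaled_upper_bound D c a b =
     LaurentQ \<inter> scale_x2 (inverse D ^ a) ` LaurentQ \<inter> scale_x2 ((D * X1 powi c) ^ b) ` LaurentQ"

context
  fixes D :: KL and c :: int
  assumes D: "D \<in> Laurent_x1" "D \<noteq> 0"
begin

private lemma D_ratfun [simp]: "D \<in> ratfun_x1"
  using D(1) by (rule Laurent_x1_imp_ratfun_x1)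

lemma scaled_upper_bound_mutation_subset:
  "scaled_upper_bound D c (Suc a) b \<subseteq> scale_x2 (inverse D) ` scaled_upper_bound D c a (Suc b)"
proof
  fix f assume "f \<in> scaled_upper_bound D c (Suc a) b"
  then obtain g g' where f: "f \<in> LaurentQ" "g \<in> LaurentQ" "f = scale_x2 (inverse D ^ Suc a) g"
    "g' \<in> LaurentQ" "f = scale_x2 ((D * X1 powi c) ^ b) g'"
    unfolding scaled_upper_bound_def by blast
  define h where "h = scale_x2 (inverse D ^ a) g"
  have fh: "f = scale_x2 (inverse D) h"
    unfolding h_def f(3) by (rule scale_x2_scale_x2_eq[symmetric]) (simp_all add: D)
  have "scale_x2 (inverse D ^ Suc a) g \<in> LaurentQ"
    using f(1,3) by simp
  then have "h \<in> LaurentQ"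
    unfolding h_def by (rule scale_x2_inverse_power_LaurentQ[OF D f(2)]) simp
  moreover have "h = scale_x2 ((D * X1 powi c) ^ Suc b) (scale_x2 (X1 powi (- c)) g')"
  proof -
    have "h = scale_x2 1 h"
      by simp
    also have "\<dots> = scale_x2 D f"
      unfolding fh by (rule scale_x2_scale_x2_eq[symmetric]) (simp_all add: D)
    also have "\<dots> = scale_x2 ((D * X1 powi c) ^ Suc b * X1 powi (- c)) g'"
      unfolding f(5) by (rule scale_x2_scale_x2_eq) (simp_all add: D power_int_minus field_simps)
    also have "\<dots> = scale_x2 ((D * X1 powi c) ^ Suc b) (scale_x2 (X1 powi (- c)) g')"
      by (rule scale_x2_scale_x2_eq[symmetric]) (simp_all add: D)
    finally show ?thesis .
  qed
  ultimately show "f \<in> scale_x2 (inverse D) ` scaled_upper_bound D c a (Suc b)"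
    using fh f(2,4) scale_x2_X1_power_int_LaurentQ unfolding scaled_upper_bound_def h_def by blast
qed

lemma scaled_upper_bound_mutation_supset:
  "scale_x2 (inverse D) ` scaled_upper_bound D c a (Suc b) \<subseteq> scaled_upper_bound D c (Suc a) b"
proof
  fix f assume "f \<in> scale_x2 (inverse D) ` scaled_upper_bound D c a (Suc b)"
  then obtain h g g' where f: "f = scale_x2 (inverse D) h" and h: "h \<in> LaurentQ" "g \<in> LaurentQ"
    "h = scale_x2 (inverse D ^ a) g" "g' \<in> LaurentQ" "h = scale_x2 ((D * X1 powi c) ^ Suc b) g'"
    unfolding scaled_upper_bound_def by blast
  have "f = scale_x2 (inverse D ^ Suc a) g"
    unfolding f h(3) by (rule scale_x2_scale_x2_eq) (simp_all add: D)
  moreover have "f = scale_x2 ((D * X1 powi c) ^ b) (scale_x2 (X1 powi c) g')"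
  proof -
    have "f = scale_x2 ((D * X1 powi c) ^ b * X1 powi c) g'"
      unfolding f h(5) by (rule scale_x2_scale_x2_eq) (simp_all add: D field_simps)
    also have "\<dots> = scale_x2 ((D * X1 powi c) ^ b) (scale_x2 (X1 powi c) g')"
      by (rule scale_x2_scale_x2_eq[symmetric]) (simp_all add: D)
    finally show ?thesis .
  qed
  moreover have "f \<in> LaurentQ"
  proof -
    have "scale_x2 (inverse D ^ Suc b) h = scale_x2 ((X1 powi c) ^ Suc b) g'"
      unfolding h(5) by (rule scale_x2_scale_x2_eq) (simp_all add: D field_simps)
    also have "(X1 powi c) ^ Suc b = X1 powi (c * int (Suc b))"
      by (simp only: power_int_mult power_int_of_nat)
    finally have "scale_x2 (inverse D ^ Suc b) h \<in> LaurentQ"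
      using scale_x2_X1_power_int_LaurentQ[OF h(4)] by simp
    from scale_x2_inverse_power_LaurentQ[OF D h(1) this, of 1] show ?thesis
      by (simp add: f)
  qed
  ultimately show "f \<in> scaled_upper_bound D c (Suc a) b"
    using h(2,4) scale_x2_X1_power_int_LaurentQ unfolding scaled_upper_bound_def by blast
qed

lemma scaled_upper_bound_mutation:
  "scaled_upper_bound D c (Suc a) b = scale_x2 (inverse D) ` scaled_upper_bound D c a (Suc b)"
  by (rule subset_antisym[OF scaled_upper_bound_mutation_subset scaled_upper_bound_mutation_supset])

end

lemma mu_e2: "mu k (0, 1) = scale_x2 (inverse (1 + X1 powi k))"
  unfolding mu_def scale_x2_def Xmon_def omega_dual_def omega_def pairing_def
  by (simp add: power_int_minus)

lemma mu_minus_e2: "mu k (0, -1) = scale_x2 (1 + X1 powi (- k))"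
  unfolding mu_def scale_x2_def Xmon_def omega_dual_def omega_def pairing_def
  by simp

lemma upper_bound_eq_scaled_upper_bound:
  "upper_bound k (replicate a (0, 1) @ replicate b (0, -1)) = scaled_upper_bound (1 + X1 powi k) (- k) a b"
proof -
  let ?V = "replicate a (0, 1) @ replicate b (0::int, -1::int)"
  have mult: "mult ?V (0, 1) = a" "mult ?V (0, -1) = b"
    and other: "v \<noteq> (0, 1) \<Longrightarrow> v \<noteq> (0, -1) \<Longrightarrow> (mu k v ^^ mult ?V v) ` LaurentQ = LaurentQ" for v
    by (auto simp: mult_def)
  have "upper_bound k ?V = LaurentQ \<inter> (mu k (0, 1) ^^ a) ` LaurentQ \<inter> (mu k (0, -1) ^^ b) ` LaurentQ"
  proof (intro set_eqI iffI)
    fix x assume x: "x \<in> LaurentQ \<inter> (mu k (0, 1) ^^ a) ` LaurentQ \<inter> (mu k (0, -1) ^^ b) ` LaurentQ"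
    then have "x \<in> (mu k v ^^ mult ?V v) ` LaurentQ" for v
      using mult other[of v] by (cases "v = (0, 1)"; cases "v = (0, -1)") auto
    then show "x \<in> upper_bound k ?V"
      using x unfolding upper_bound_def by blast
  next
    fix x assume "x \<in> upper_bound k ?V"
    then have "x \<in> LaurentQ" "\<And>v. x \<in> (mu k v ^^ mult ?V v) ` LaurentQ"
      unfolding upper_bound_def by blast+
    then show "x \<in> LaurentQ \<inter> (mu k (0, 1) ^^ a) ` LaurentQ \<inter> (mu k (0, -1) ^^ b) ` LaurentQ"
      using mult by (metis IntI)
  qed
  also have "(mu k (0, 1) ^^ a) = scale_x2 (inverse (1 + X1 powi k) ^ a)"
    unfolding mu_e2 by (rule funpow_scale_x2) (simp_all add: one_plus_X1_power_int_nonzero)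
  also have "(mu k (0, -1) ^^ b) = scale_x2 ((1 + X1 powi (- k)) ^ b)"
    unfolding mu_minus_e2 by (rule funpow_scale_x2) (simp_all add: one_plus_X1_power_int_nonzero)
  also have "1 + X1 powi (- k) = (1 + X1 powi k) * X1 powi (- k)"
    by (simp add: distrib_right flip: power_int_add)
  finally show ?thesis
    unfolding scaled_upper_bound_def .
qed

theorem proposition3p7:
  fixes k :: int and m1 m2 :: nat
  assumes "k \<noteq> 0" and "m1 \<ge> 1"
  shows "upper_bound k (replicate m1 (0, 1) @ replicate m2 (0, -1))
       = mu k (0, 1) ` upper_bound k (replicate (m1 - 1) (0, 1) @ replicate (m2 + 1) (0, -1))"
proof -
  obtain n where m1: "m1 = Suc n"
    using assms(2) by (cases m1) auto
  show ?thesis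
    unfolding m1 upper_bound_eq_scaled_upper_bound mu_e2 diff_Suc_1 Suc_eq_plus1[symmetric]
    by (rule scaled_upper_bound_mutation[OF one_plus_X1_power_int_in_Laurent_x1 one_plus_X1_power_int_nonzero])
qed

end
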